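(* Let $P\subset\mathbb{R}^k$ be a polytope. Then $\operatorname{ic}(P)\geqslant 2\sqrt{\operatorname{trdeg}(P)}-k$.
   Context: For a polytope $P\subset\mathbb{R}^d$, $\mathbb{Q}(P)$ is the field obtained from $\mathbb{Q}$ by adjoining all coordinates of all vertices of $P$, and $\operatorname{trdeg}(P)$ is the transcendence degree of $\mathbb{Q}(P)$ over $\mathbb{Q}$. For polytopes $P\subset\mathbb{R}^d$ and $Q\subset\mathbb{R}^N$ ($N\geqslant d$), $P$ is a slice of $Q$ if $P\times\{0\}=Q\cap H$ where $H=\{x\in\mathbb{R}^N: x_{d+1}=\cdots=x_N=0\}$. The intersection complexity $\operatorname{ic}(P)$ is the smallest integer $k$ such that $P$ is a slice of a polytope with $k$ vertices. *)

theory Defs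
  imports Complex_Main
begin

text \<open>Points of R^N are represented as functions nat => real vanishing at all
  indices >= N (coordinates are indexed 0..N-1).\<close>

definition R_space :: "nat \<Rightarrow> (nat \<Rightarrow> real) set" where
  "R_space N = {x. \<forall>i\<ge>N. x i = 0}"

definition conv_hull :: "(nat \<Rightarrow> real) set \<Rightarrow> (nat \<Rightarrow> real) set" where
  "conv_hull V = {x. \<exists>u. (\<forall>v\<in>V. 0 \<le> u v) \<and> sum u V = 1 \<and>
                        x = (\<lambda>i. \<Sum>v\<in>V. u v * v i)}"

definition is_polytope :: "nat \<Rightarrow> (nat \<Rightarrow> real) set \<Rightarrow> bool" where
  "is_polytope d P \<longleftrightarrow> (\<exists>V. finite V \<and> V \<subseteq> R_space d \<and> P = conv_hull V)"

definition vertices :: "(nat \<Rightarrow> real) set \<Rightarrow> (nat \<Rightarrow> real) set" where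
  "vertices P = {v\<in>P. \<not> (\<exists>a\<in>P. \<exists>b\<in>P. a \<noteq> b \<and>
       (\<exists>t::real. 0 < t \<and> t < 1 \<and> v = (\<lambda>i. (1 - t) * a i + t * b i)))}"

definition is_slice :: "nat \<Rightarrow> (nat \<Rightarrow> real) set \<Rightarrow> nat \<Rightarrow> (nat \<Rightarrow> real) set \<Rightarrow> bool" where
  "is_slice d P N Q \<longleftrightarrow> d \<le> N \<and> is_polytope d P \<and> is_polytope N Q \<and>
      P = {x\<in>Q. \<forall>i. d \<le> i \<and> i < N \<longrightarrow> x i = 0}"

definition ic :: "nat \<Rightarrow> (nat \<Rightarrow> real) set \<Rightarrow> nat" where
  "ic d P = (LEAST n. \<exists>N Q. is_slice d P N Q \<and> card (vertices Q) = n)"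

definition gen_field :: "real set \<Rightarrow> real set" where
  "gen_field S = \<Inter>{F. S \<subseteq> F \<and> 0 \<in> F \<and> 1 \<in> F \<and>
      (\<forall>x\<in>F. \<forall>y\<in>F. x + y \<in> F \<and> - x \<in> F \<and> x * y \<in> F) \<and>
      (\<forall>x\<in>F. x \<noteq> 0 \<longrightarrow> inverse x \<in> F)}"

definition field_of :: "(nat \<Rightarrow> real) set \<Rightarrow> real set" where
  "field_of P = gen_field {v i | v i. v \<in> vertices P}"

text \<open>Algebraic independence over Q of a finite set S of reals: every polynomial
  with rational coefficients in the variables S (monomials = exponent maps
  S -> nat, zero outside S) vanishing on S has all coefficients zero.\<close>
definition alg_indep_rat :: "real set \<Rightarrow> bool" where
  "alg_indep_rat S \<longleftrightarrow> finite S \<and>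
     (\<forall>(M :: (real \<Rightarrow> nat) set) (c :: (real \<Rightarrow> nat) \<Rightarrow> rat).
        finite M \<and> (\<forall>m\<in>M. \<forall>x. x \<notin> S \<longrightarrow> m x = 0) \<and>
        (\<Sum>m\<in>M. of_rat (c m) * (\<Prod>s\<in>S. s ^ m s)) = 0
        \<longrightarrow> (\<forall>m\<in>M. c m = 0))"

definition trdeg_field :: "real set \<Rightarrow> nat" where
  "trdeg_field F = Sup {card S | S. S \<subseteq> F \<and> alg_indep_rat S}"

definition trdeg :: "(nat \<Rightarrow> real) set \<Rightarrow> nat" where
  "trdeg P = trdeg_field (field_of P)"

end

theory Submission
  imports Defs "HOL-Library.FuncSet"
begin

text \<open>Let \<open>P\<close> be the slice of a polytope \<open>Q \<subseteq> \<real>\<^sup>N\<close> with vertex set \<open>W\<close>, \<open>|W| = n\<close>, by the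
  subspace \<open>x\<^sub>k = \<dots> = x\<^sub>N\<^sub>-\<^sub>1 = 0\<close>. Choose \<open>B \<subseteq> W\<close>, \<open>|B| = r\<close>, maximal such that the tails
  \<open>(u\<^sub>k, \<dots>, u\<^sub>N\<^sub>-\<^sub>1)\<close> of the points \<open>u \<in> B\<close> are linearly independent, and write the tail of each
  \<open>w \<in> W\<close> as \<open>\<Sum>u\<in>B. \<alpha> w u \<cdot> tail u\<close>. A vertex of \<open>P\<close> is a convex combination of a minimal set
  of vertices of \<open>Q\<close> whose weights are the unique solution of a linear system with
  coefficients \<open>\<alpha>\<close>; hence all vertex coordinates of \<open>P\<close> lie in the field generated by the
  \<open>(n - r)(k + r)\<close> numbers \<open>\<alpha> w u\<close> and \<open>w\<^sub>i - \<Sum>u\<in>B. \<alpha> w u \<cdot> u\<^sub>i\<close> (\<open>w \<in> W - B\<close>, \<open>u \<in> B\<close>,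
  \<open>i < k\<close>). A field generated by \<open>m\<close> numbers has transcendence degree at most \<open>m\<close>, so
  \<open>trdeg P \<le> (n - r)(k + r) \<le> ((n + k) / 2)\<^sup>2\<close>.\<close>

section \<open>Linear systems over subfields of the reals\<close>

lemma homogeneous_system_nontrivial_solution:
  fixes a :: "'i \<Rightarrow> 'e \<Rightarrow> 'f::field"
  assumes "finite M" "finite I" "card M < card I"
  shows "\<exists>c. (\<exists>i\<in>I. c i \<noteq> 0) \<and> (\<forall>e\<in>M. (\<Sum>i\<in>I. c i * a i e) = 0)"
  using assms
proof (induction M arbitrary: I a rule: finite_induct)
  case empty
  then obtain i where "i \<in> I" by fastforce
  then show ?case by (intro exI[of _ "\<lambda>_. 1"]) auto
next
  case (insert e0 M)
  show ?case
  proof (cases "\<forall>i\<in>I. a i e0 = 0")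
    case True
    from insert have "card M < card I" by simp
    from insert.IH[OF insert.prems(1) this] obtain c where
      c: "\<exists>i\<in>I. c i \<noteq> 0" "\<forall>e\<in>M. (\<Sum>i\<in>I. c i * a i e) = 0" by blast
    show ?thesis using c True by (intro exI[of _ c]) auto
  next
    case False
    then obtain i0 where i0: "i0 \<in> I" "a i0 e0 \<noteq> 0" by blast
    \<comment> \<open>Eliminate the unknown \<open>i0\<close> using the equation \<open>e0\<close>.\<close>
    define a' where "a' = (\<lambda>i e. a i e - a i e0 / a i0 e0 * a i0 e)"
    have fin': "finite (I - {i0})" using insert by simp
    have "card M < card (I - {i0})" using insert i0 by (simp add: card_Diff_singleton)
    from insert.IH[OF fin' this, of a'] obtain c' where
      c': "\<exists>i\<in>I - {i0}. c' i \<noteq> 0" "\<forall>e\<in>M. (\<Sum>i\<in>I - {i0}. c' i * a' i e) = 0" by blast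
    define c where "c = c'(i0 := - (\<Sum>i\<in>I - {i0}. c' i * a i e0) / a i0 e0)"
    have split: "(\<Sum>i\<in>I. c i * a i e) = c i0 * a i0 e + (\<Sum>i\<in>I - {i0}. c' i * a i e)" for e
    proof -
      have "(\<Sum>i\<in>I. c i * a i e) = c i0 * a i0 e + (\<Sum>i\<in>I - {i0}. c i * a i e)"
        using i0 insert.prems(1) by (simp add: sum.remove)
      also have "(\<Sum>i\<in>I - {i0}. c i * a i e) = (\<Sum>i\<in>I - {i0}. c' i * a i e)"
        by (rule sum.cong) (auto simp: c_def)
      finally show ?thesis .
    qed
    have "(\<Sum>i\<in>I. c i * a i e) = 0" if e: "e \<in> insert e0 M" for e
    proof (cases "e = e0")
      case True
      then show ?thesis using i0 by (simp only: split) (simp add: c_def)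
    next
      case False
      then have eM: "e \<in> M" using e by simp
      have "(\<Sum>i\<in>I - {i0}. c' i * a' i e) = (\<Sum>i\<in>I - {i0}. c' i * a i e)
            - (\<Sum>i\<in>I - {i0}. c' i * a i e0) / a i0 e0 * a i0 e"
        by (simp add: a'_def algebra_simps sum_subtractf sum_distrib_left sum_divide_distrib
            sum_distrib_right)
      then show ?thesis using c'(2) eM by (simp only: split) (simp add: c_def algebra_simps)
    qed
    moreover have "\<exists>i\<in>I. c i \<noteq> 0" using c'(1) by (auto simp: c_def)
    ultimately show ?thesis by blast
  qed
qed

definition subfield :: "real set \<Rightarrow> bool" where
  "subfield F \<longleftrightarrow> 0 \<in> F \<and> 1 \<in> F \<and> (\<forall>x\<in>F. \<forall>y\<in>F. x + y \<in> F \<and> - x \<in> F \<and> x * y \<in> F) \<and>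
      (\<forall>x\<in>F. x \<noteq> 0 \<longrightarrow> inverse x \<in> F)"

lemma gen_field_eq: "gen_field S = \<Inter>{F. S \<subseteq> F \<and> subfield F}"
  unfolding gen_field_def subfield_def by simp

lemma subfield_gen_field: "subfield (gen_field S)"
  unfolding gen_field_eq subfield_def by blast

lemma gen_field_superset: "S \<subseteq> gen_field S"
  unfolding gen_field_eq by blast

lemma gen_field_least: "S \<subseteq> F \<Longrightarrow> subfield F \<Longrightarrow> gen_field S \<subseteq> F"
  unfolding gen_field_eq by blast

context
  fixes F assumes F: "subfield F"
begin

lemma subfield_zero: "0 \<in> F"
  using F by (simp add: subfield_def)

lemma subfield_one: "1 \<in> F"
  using F by (simp add: subfield_def)

lemma subfield_add: "x \<in> F \<Longrightarrow> y \<in> F \<Longrightarrow> x + y \<in> F"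
  using F by (simp add: subfield_def)

lemma subfield_mult: "x \<in> F \<Longrightarrow> y \<in> F \<Longrightarrow> x * y \<in> F"
  using F by (simp add: subfield_def)

lemma subfield_uminus: "x \<in> F \<Longrightarrow> - x \<in> F"
  using F by (simp add: subfield_def)

lemma subfield_inverse: "x \<in> F \<Longrightarrow> inverse x \<in> F"
  using F by (cases "x = 0") (auto simp: subfield_def)

lemma subfield_diff: "x \<in> F \<Longrightarrow> y \<in> F \<Longrightarrow> x - y \<in> F"
  using subfield_add[of x "- y"] subfield_uminus[of y] by simp

lemma subfield_divide: "x \<in> F \<Longrightarrow> y \<in> F \<Longrightarrow> x / y \<in> F"
  using subfield_mult[of x "inverse y"] subfield_inverse[of y] by (simp add: divide_inverse)

lemma subfield_sum: "(\<And>x. x \<in> A \<Longrightarrow> f x \<in> F) \<Longrightarrow> sum f A \<in> F"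
  by (induction A rule: infinite_finite_induct) (auto simp: subfield_zero subfield_add)

end

text \<open>A linear system is a set \<open>E\<close> of equations \<open>(a, b)\<close>, read as \<open>\<Sum>j\<in>J. a j * x j = b\<close>.\<close>

definition lin_solutions :: "'j set \<Rightarrow> (('j \<Rightarrow> real) \<times> real) set \<Rightarrow> ('j \<Rightarrow> real) set" where
  "lin_solutions J E = {x. \<forall>(a, b)\<in>E. (\<Sum>j\<in>J. a j * x j) = b}"

definition eliminate ::
  "'j \<Rightarrow> ('j \<Rightarrow> real) \<Rightarrow> real \<Rightarrow> (('j \<Rightarrow> real) \<times> real) set \<Rightarrow> (('j \<Rightarrow> real) \<times> real) set" where
  "eliminate j0 a0 b0 E =
     (\<lambda>(a, b). (\<lambda>j. a j - a j0 / a0 j0 * a0 j, b - a j0 / a0 j0 * b0)) ` E"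

lemma lin_solutions_eliminate:
  assumes "finite J" "j0 \<notin> J" "(a0, b0) \<in> E" "a0 j0 \<noteq> 0"
  shows "x \<in> lin_solutions (insert j0 J) E \<longleftrightarrow>
    x \<in> lin_solutions J (eliminate j0 a0 b0 E) \<and> a0 j0 * x j0 + (\<Sum>j\<in>J. a0 j * x j) = b0"
    (is "?lhs \<longleftrightarrow> ?rhs \<and> ?eq0")
proof -
  have reduce: "(\<Sum>j\<in>J. (a j - r * a0 j) * x j)
      = (\<Sum>j\<in>insert j0 J. a j * x j) - r * (\<Sum>j\<in>insert j0 J. a0 j * x j)"
    if "r = a j0 / a0 j0" for a r
    using assms that by (simp add: algebra_simps sum_subtractf sum_distrib_left)
  have eq0: "(\<Sum>j\<in>insert j0 J. a0 j * x j) = a0 j0 * x j0 + (\<Sum>j\<in>J. a0 j * x j)"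
    using assms by simp
  have elim_eq: "(\<Sum>j\<in>J. (a j - a j0 / a0 j0 * a0 j) * x j) = b - a j0 / a0 j0 * b0
      \<longleftrightarrow> (\<Sum>j\<in>insert j0 J. a j * x j) = b" if ?eq0 for a b
    using reduce[of "a j0 / a0 j0" a] that eq0 by auto
  have sols: "?rhs \<longleftrightarrow> (\<forall>(a, b)\<in>E.
      (\<Sum>j\<in>J. (a j - a j0 / a0 j0 * a0 j) * x j) = b - a j0 / a0 j0 * b0)"
    by (auto simp: lin_solutions_def eliminate_def left_diff_distrib)
  show ?thesis
  proof
    assume x: ?lhs
    then have ?eq0 using assms(3) eq0 by (auto simp: lin_solutions_def)
    with x show "?rhs \<and> ?eq0" using elim_eq sols by (auto simp: lin_solutions_def)
  next
    assume "?rhs \<and> ?eq0"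
    then show ?lhs using elim_eq sols by (auto simp: lin_solutions_def)
  qed
qed

lemma eliminate_unique_solution:
  assumes "finite J" "j0 \<notin> J" "(a0, b0) \<in> E" "a0 j0 \<noteq> 0"
    and unique: "\<forall>x\<in>lin_solutions (insert j0 J) E. \<forall>j\<in>insert j0 J. x j = x0 j"
  shows "\<forall>x\<in>lin_solutions J (eliminate j0 a0 b0 E). \<forall>j\<in>J. x j = x0 j"
proof (intro ballI)
  fix x j assume x: "x \<in> lin_solutions J (eliminate j0 a0 b0 E)" and j: "j \<in> J"
  \<comment> \<open>Extend \<open>x\<close> by solving the pivot equation for \<open>x j0\<close>.\<close>
  define x' where "x' = x(j0 := (b0 - (\<Sum>j\<in>J. a0 j * x j)) / a0 j0)"
  have "(\<Sum>j\<in>J. a j * x' j) = (\<Sum>j\<in>J. a j * x j)" for a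
    using assms(2) by (intro sum.cong) (auto simp: x'_def)
  moreover from this have "x' \<in> lin_solutions J (eliminate j0 a0 b0 E)"
    using x by (simp add: lin_solutions_def)
  ultimately have "x' \<in> lin_solutions (insert j0 J) E"
    using lin_solutions_eliminate[OF assms(1-4)] assms(4) by (simp add: x'_def field_simps)
  then have "x' j = x0 j" using unique j by blast
  then show "x j = x0 j" using j assms(2) by (simp add: x'_def split: if_splits)
qed

lemma unique_solution_in_subfield:
  assumes K: "subfield K" and "finite J"
    and coeffs: "\<forall>(a, b)\<in>E. (\<forall>j\<in>J. a j \<in> K) \<and> b \<in> K"
    and sol: "x0 \<in> lin_solutions J E"
    and unique: "\<forall>x\<in>lin_solutions J E. \<forall>j\<in>J. x j = x0 j"
  shows "\<forall>j\<in>J. x0 j \<in> K"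
  using \<open>finite J\<close> coeffs sol unique
proof (induction J arbitrary: E rule: finite_induct)
  case empty
  then show ?case by simp
next
  case (insert j0 J E)
  show ?case
  proof (cases "\<exists>(a, b)\<in>E. a j0 \<noteq> 0")
    case False
    \<comment> \<open>Then \<open>x j0\<close> is unconstrained, contradicting uniqueness.\<close>
    define x1 where "x1 = x0(j0 := x0 j0 + 1)"
    have "x1 \<in> lin_solutions (insert j0 J) E"
      unfolding lin_solutions_def
    proof clarify
      fix a b assume ab: "(a, b) \<in> E"
      then have "a j0 = 0" using False by force
      then have "(\<Sum>j\<in>insert j0 J. a j * x1 j) = (\<Sum>j\<in>insert j0 J. a j * x0 j)"
        using insert.hyps by (simp add: x1_def) (rule sum.cong, auto)
      also have "\<dots> = b" using insert.prems(2) ab unfolding lin_solutions_def by auto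
      finally show "(\<Sum>j\<in>insert j0 J. a j * x1 j) = b" .
    qed
    then have "x1 j0 = x0 j0" using insert.prems(3) by blast
    then show ?thesis by (simp add: x1_def)
  next
    case True
    then obtain a0 b0 where ab0: "(a0, b0) \<in> E" "a0 j0 \<noteq> 0" by blast
    note elim = lin_solutions_eliminate[OF insert.hyps ab0]
    have a0K: "\<forall>j\<in>insert j0 J. a0 j \<in> K" "b0 \<in> K" using insert.prems(1) ab0(1) by auto
    have "\<forall>(a, b)\<in>eliminate j0 a0 b0 E. (\<forall>j\<in>J. a j \<in> K) \<and> b \<in> K"
      using insert.prems(1) a0K
      by (fastforce simp: eliminate_def intro!: subfield_diff[OF K] subfield_mult[OF K]
          subfield_divide[OF K])
    moreover have "x0 \<in> lin_solutions J (eliminate j0 a0 b0 E)"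
      using elim insert.prems(2) by blast
    moreover have "\<forall>x\<in>lin_solutions J (eliminate j0 a0 b0 E). \<forall>j\<in>J. x j = x0 j"
      by (rule eliminate_unique_solution[OF insert.hyps ab0 insert.prems(3)])
    ultimately have IH: "\<forall>j\<in>J. x0 j \<in> K" by (rule insert.IH)
    have "x0 j0 = (b0 - (\<Sum>j\<in>J. a0 j * x0 j)) / a0 j0"
      using elim insert.prems(2) ab0(2) by (simp add: field_simps)
    then have "x0 j0 \<in> K" using IH a0K
      by (auto intro!: subfield_divide[OF K] subfield_diff[OF K] subfield_sum[OF K]
          subfield_mult[OF K])
    with IH show ?thesis by simp
  qed
qed

section \<open>Transcendence degree of a finitely generated field\<close>

definition exps :: "real set \<Rightarrow> nat \<Rightarrow> (real \<Rightarrow> nat) set" where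
  "exps A D = {e. (\<forall>x. x \<notin> A \<longrightarrow> e x = 0) \<and> (\<forall>a\<in>A. e a \<le> D)}"

lemma exps_bij: "bij_betw (\<lambda>e. restrict e A) (exps A D) (PiE A (\<lambda>_. {..D}))"
proof (rule bij_betw_byWitness[where f' = "\<lambda>f x. if x \<in> A then f x else 0"])
  show "\<forall>a\<in>exps A D. (\<lambda>x. if x \<in> A then restrict a A x else 0) = a"
    by (auto simp: exps_def fun_eq_iff)
  show "\<forall>a'\<in>PiE A (\<lambda>_. {..D}). restrict (\<lambda>x. if x \<in> A then a' x else 0) A = a'"
    by (auto simp: fun_eq_iff PiE_def extensional_def)
  show "(\<lambda>e. restrict e A) ` exps A D \<subseteq> PiE A (\<lambda>_. {..D})"
    by (auto simp: exps_def)
  show "(\<lambda>f x. if x \<in> A then f x else 0) ` PiE A (\<lambda>_. {..D}) \<subseteq> exps A D"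
    by (auto simp: exps_def)
qed

lemma finite_exps: "finite A \<Longrightarrow> finite (exps A D)"
  using bij_betw_finite[OF exps_bij] by (simp add: finite_PiE)

lemma card_exps: "finite A \<Longrightarrow> card (exps A D) = (D+1) ^ card A"
  using bij_betw_same_card[OF exps_bij] by (simp add: card_PiE)

definition monomial :: "real set \<Rightarrow> (real \<Rightarrow> nat) \<Rightarrow> real" where
  "monomial A e = (\<Prod>t\<in>A. t ^ e t)"

text \<open>The numbers in \<open>A\<close> play the role of both the variables and the point of evaluation:
  \<open>rat_poly A D\<close> is the set of values at \<open>A\<close> of the polynomials with rational coefficients
  of degree at most \<open>D\<close> in each variable.\<close>

definition rat_poly :: "real set \<Rightarrow> nat \<Rightarrow> real set" where
  "rat_poly A D = {x. \<exists>c. x = (\<Sum>e\<in>exps A D. of_rat (c e) * monomial A e)}"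

lemma exps_mono: "D \<le> D' \<Longrightarrow> exps A D \<subseteq> exps A D'"
  by (auto simp: exps_def)

lemma monomial_add: "monomial A (\<lambda>x. e1 x + e2 x) = monomial A e1 * monomial A e2"
  by (simp add: monomial_def power_add prod.distrib)

lemma rat_poly_single:
  assumes "finite A" "e0 \<in> exps A D"
  shows "of_rat q * monomial A e0 \<in> rat_poly A D"
proof -
  have "of_rat q * monomial A e0 = (\<Sum>e\<in>exps A D. if e = e0 then of_rat q * monomial A e else 0)"
    using assms finite_exps[OF assms(1)] by (simp add: sum.delta')
  also have "\<dots> = (\<Sum>e\<in>exps A D. of_rat (if e = e0 then q else 0) * monomial A e)"
    by (rule sum.cong) auto
  finally show ?thesis
    unfolding rat_poly_def by (intro CollectI exI[of _ "\<lambda>e. if e = e0 then q else 0"])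
qed

context
  fixes A :: "real set"
  assumes A: "finite A"
begin

lemma rat_poly_mono:
  assumes "D \<le> D'"
  shows "rat_poly A D \<subseteq> rat_poly A D'"
proof
  fix x assume "x \<in> rat_poly A D"
  then obtain c where x: "x = (\<Sum>e\<in>exps A D. of_rat (c e) * monomial A e)"
    by (auto simp: rat_poly_def)
  define c' where "c' e = (if e \<in> exps A D then c e else 0)" for e
  have "(\<Sum>e\<in>exps A D'. of_rat (c' e) * monomial A e) = (\<Sum>e\<in>exps A D. of_rat (c' e) * monomial A e)"
    using finite_exps[OF A] exps_mono[OF assms]
    by (intro sum.mono_neutral_right) (auto simp: c'_def)
  also have "\<dots> = x" unfolding x by (rule sum.cong) (auto simp: c'_def)
  finally show "x \<in> rat_poly A D'" by (auto simp: rat_poly_def)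
qed

lemma rat_poly_add: "x \<in> rat_poly A D \<Longrightarrow> y \<in> rat_poly A D \<Longrightarrow> x + y \<in> rat_poly A D"
proof -
  assume "x \<in> rat_poly A D" "y \<in> rat_poly A D"
  then obtain c d where "x = (\<Sum>e\<in>exps A D. of_rat (c e) * monomial A e)"
    and "y = (\<Sum>e\<in>exps A D. of_rat (d e) * monomial A e)"
    by (auto simp: rat_poly_def)
  then have "x + y = (\<Sum>e\<in>exps A D. of_rat (c e + d e) * monomial A e)"
    by (simp add: sum.distrib of_rat_add algebra_simps)
  then show ?thesis by (auto simp: rat_poly_def)
qed

lemma rat_poly_uminus: "x \<in> rat_poly A D \<Longrightarrow> - x \<in> rat_poly A D"
proof -
  assume "x \<in> rat_poly A D"
  then obtain c where "x = (\<Sum>e\<in>exps A D. of_rat (c e) * monomial A e)"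
    by (auto simp: rat_poly_def)
  then have "- x = (\<Sum>e\<in>exps A D. of_rat (- c e) * monomial A e)"
    by (simp add: sum_negf of_rat_minus)
  then show ?thesis by (auto simp: rat_poly_def)
qed

lemma rat_poly_of_rat: "of_rat q \<in> rat_poly A D"
  using rat_poly_single[OF A, of "\<lambda>_. 0" D q] by (simp add: exps_def monomial_def)

lemma rat_poly_var:
  assumes "t \<in> A" "1 \<le> D"
  shows "t \<in> rat_poly A D"
proof -
  define e where "e x = (if x = t then 1 else (0::nat))" for x
  have "monomial A e = (\<Prod>x\<in>A. if x = t then t else 1)"
    unfolding monomial_def by (rule prod.cong) (auto simp: e_def)
  also have "\<dots> = t" using assms A by (simp add: prod.delta)
  finally show ?thesis
    using rat_poly_single[OF A, of e D 1] assms by (simp add: exps_def e_def)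
qed

lemma rat_poly_mult:
  assumes "x \<in> rat_poly A D1" "y \<in> rat_poly A D2"
  shows "x * y \<in> rat_poly A (D1 + D2)"
proof -
  obtain c d where x: "x = (\<Sum>e\<in>exps A D1. of_rat (c e) * monomial A e)"
    and y: "y = (\<Sum>e\<in>exps A D2. of_rat (d e) * monomial A e)"
    using assms by (auto simp: rat_poly_def)
  define g where "g = (\<lambda>(e1::real\<Rightarrow>nat, e2::real\<Rightarrow>nat). (\<lambda>x. e1 x + e2 x))"
  define h where "h = (\<lambda>(e1, e2). of_rat (c e1 * d e2) * monomial A (g (e1, e2)))"
  define X where "X = exps A D1 \<times> exps A D2"
  have X: "finite X" using finite_exps[OF A] by (simp add: X_def)
  have "x * y = (\<Sum>p\<in>X. h p)"
    unfolding x y X_def sum_product sum.cartesian_product h_def g_def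
    by (rule sum.cong) (auto simp: monomial_add of_rat_mult)
  also have "\<dots> = (\<Sum>e\<in>exps A (D1 + D2). sum h {p \<in> X. g p = e})"
    using X finite_exps[OF A]
    by (intro sum.group[symmetric]) (auto simp: X_def g_def exps_def add_mono)
  also have "\<dots> = (\<Sum>e\<in>exps A (D1 + D2).
      of_rat (\<Sum>p\<in>{p \<in> X. g p = e}. c (fst p) * d (snd p)) * monomial A e)"
    by (rule sum.cong)
      (auto simp: h_def of_rat_sum sum_distrib_right split: prod.splits intro!: sum.cong)
  finally show ?thesis by (auto simp: rat_poly_def)
qed

lemma rat_poly_power: "x \<in> rat_poly A D \<Longrightarrow> x ^ n \<in> rat_poly A (D * n)"
proof (induction n)
  case 0
  then show ?case using rat_poly_of_rat[of 1 0] by simp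
next
  case (Suc n)
  then have "x * x ^ n \<in> rat_poly A (D + D * n)" by (intro rat_poly_mult) auto
  then show ?case by simp
qed

lemma rat_poly_prod:
  "finite I \<Longrightarrow> (\<And>i. i \<in> I \<Longrightarrow> f i \<in> rat_poly A (d i)) \<Longrightarrow> prod f I \<in> rat_poly A (sum d I)"
proof (induction I rule: finite_induct)
  case empty
  then show ?case using rat_poly_of_rat[of 1 0] by simp
next
  case (insert i I)
  then show ?case by (simp add: rat_poly_mult)
qed

lemma rat_poly_lin_dependent:
  assumes "finite I" "card (exps A D) < card I" "\<And>i. i \<in> I \<Longrightarrow> g i \<in> rat_poly A D"
  shows "\<exists>c. (\<exists>i\<in>I. c i \<noteq> 0) \<and> (\<Sum>i\<in>I. of_rat (c i) * g i) = 0"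
proof -
  have "\<forall>i\<in>I. \<exists>a. g i = (\<Sum>e\<in>exps A D. of_rat (a e) * monomial A e)"
    using assms(3) by (auto simp: rat_poly_def)
  then obtain a where a: "\<And>i. i \<in> I \<Longrightarrow> g i = (\<Sum>e\<in>exps A D. of_rat (a i e) * monomial A e)"
    by metis
  obtain c where c: "\<exists>i\<in>I. c i \<noteq> 0" "\<forall>e\<in>exps A D. (\<Sum>i\<in>I. c i * a i e) = 0"
    using homogeneous_system_nontrivial_solution[OF finite_exps[OF A] assms(1,2), of a] by blast
  have "(\<Sum>i\<in>I. of_rat (c i) * g i) = (\<Sum>i\<in>I. \<Sum>e\<in>exps A D. of_rat (c i * a i e) * monomial A e)"
    by (rule sum.cong) (auto simp: a sum_distrib_left of_rat_mult algebra_simps)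
  also have "\<dots> = (\<Sum>e\<in>exps A D. of_rat (\<Sum>i\<in>I. c i * a i e) * monomial A e)"
    by (subst sum.swap) (simp add: of_rat_sum sum_distrib_right)
  also have "\<dots> = 0" using c(2) by simp
  finally show ?thesis using c(1) by blast
qed

end

definition rat_fun :: "real set \<Rightarrow> real set" where
  "rat_fun A = {x. \<exists>D a b. a \<in> rat_poly A D \<and> b \<in> rat_poly A D \<and> b \<noteq> 0 \<and> x = a / b}"

lemma divide_in_rat_fun: "a \<in> rat_poly A D \<Longrightarrow> b \<in> rat_poly A D \<Longrightarrow> b \<noteq> 0 \<Longrightarrow> a / b \<in> rat_fun A"
  unfolding rat_fun_def by blast

lemma subfield_rat_fun:
  assumes A: "finite A"
  shows "subfield (rat_fun A)"
proof -
  have one: "1 \<in> rat_poly A D" and zero: "0 \<in> rat_poly A D" for D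
    using rat_poly_of_rat[OF A, of 1] rat_poly_of_rat[OF A, of 0] by simp_all
  have closed: "x + y \<in> rat_fun A \<and> - x \<in> rat_fun A \<and> x * y \<in> rat_fun A"
    if x_in: "x \<in> rat_fun A" and y_in: "y \<in> rat_fun A" for x y
  proof -
    obtain D a b where x: "a \<in> rat_poly A D" "b \<in> rat_poly A D" "b \<noteq> 0" "x = a / b"
      using x_in unfolding rat_fun_def by blast
    obtain D' c d where y: "c \<in> rat_poly A D'" "d \<in> rat_poly A D'" "d \<noteq> 0" "y = c / d"
      using y_in unfolding rat_fun_def by blast
    have bd: "b * d \<in> rat_poly A (D + D')" "b * d \<noteq> 0"
      using x y by (simp_all add: rat_poly_mult[OF A])
    have "(a * d + b * c) / (b * d) \<in> rat_fun A"
      using x y by (intro divide_in_rat_fun[OF _ bd] rat_poly_add[OF A] rat_poly_mult[OF A])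
    moreover have "(a * c) / (b * d) \<in> rat_fun A"
      using x y by (intro divide_in_rat_fun[OF _ bd] rat_poly_mult[OF A])
    moreover have "(- a) / b \<in> rat_fun A"
      using x by (intro divide_in_rat_fun[OF _ x(2,3)] rat_poly_uminus[OF A])
    moreover have "x + y = (a * d + b * c) / (b * d)" "- x = (- a) / b" "x * y = (a * c) / (b * d)"
      using x(3,4) y(3,4) by (simp_all add: field_simps)
    ultimately show ?thesis by simp
  qed
  have "inverse x \<in> rat_fun A" if x_in: "x \<in> rat_fun A" and nz: "x \<noteq> 0" for x
  proof -
    obtain D a b where x: "a \<in> rat_poly A D" "b \<in> rat_poly A D" "b \<noteq> 0" "x = a / b"
      using x_in unfolding rat_fun_def by blast
    then have "inverse x = b / a" "a \<noteq> 0" using nz by auto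
    then show ?thesis using divide_in_rat_fun[OF x(2,1)] by simp
  qed
  moreover have "0 \<in> rat_fun A" "1 \<in> rat_fun A"
    using divide_in_rat_fun[OF zero one] divide_in_rat_fun[OF one one] by simp_all
  ultimately show ?thesis using closed unfolding subfield_def by blast
qed

lemma subset_rat_fun:
  assumes "finite A"
  shows "A \<subseteq> rat_fun A"
proof
  fix t assume "t \<in> A"
  then have "t / 1 \<in> rat_fun A"
    using rat_poly_var[OF assms] rat_poly_of_rat[OF assms, of 1 1] by (intro divide_in_rat_fun) auto
  then show "t \<in> rat_fun A" by simp
qed

lemma gen_field_subset_rat_fun: "finite A \<Longrightarrow> gen_field A \<subseteq> rat_fun A"
  by (intro gen_field_least subset_rat_fun subfield_rat_fun)

lemma rat_fun_common_denominator:
  assumes T: "finite T" and S: "finite S" "S \<subseteq> rat_fun T"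
  shows "\<exists>D b a. b \<in> rat_poly T D \<and> b \<noteq> 0 \<and> (\<forall>s\<in>S. a s \<in> rat_poly T D \<and> s = a s / b)"
proof -
  have "\<forall>s\<in>S. \<exists>D a b. a \<in> rat_poly T D \<and> b \<in> rat_poly T D \<and> b \<noteq> 0 \<and> s = a / b"
    using S(2) unfolding rat_fun_def by blast
  then obtain Ds a b where ab: "\<And>s. s \<in> S \<Longrightarrow>
      a s \<in> rat_poly T (Ds s) \<and> b s \<in> rat_poly T (Ds s) \<and> b s \<noteq> 0 \<and> s = a s / b s"
    by metis
  define D where "D = sum Ds S"
  have ab_D: "a s \<in> rat_poly T D" "b s \<in> rat_poly T D" if "s \<in> S" for s
    using ab[OF that] rat_poly_mono[OF T, of "Ds s" D] member_le_sum[OF that, of Ds, OF _ S(1)]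
    by (auto simp: D_def)
  define c where "c = card S * D"
  \<comment> \<open>\<open>s = a s * (\<Prod>t\<in>S - {s}. b t) / (\<Prod>t\<in>S. b t)\<close>\<close>
  define a' where "a' s = a s * (\<Prod>t\<in>S - {s}. b t)" for s
  have "(\<Prod>s\<in>S. b s) \<in> rat_poly T c"
    using rat_poly_prod[OF T S(1), of b "\<lambda>_. D"] ab_D by (simp add: c_def)
  moreover have "(\<Prod>s\<in>S. b s) \<noteq> 0" using ab S(1) by simp
  moreover have "a' s \<in> rat_poly T c \<and> s = a' s / (\<Prod>s\<in>S. b s)" if s: "s \<in> S" for s
  proof
    have "(\<Prod>t\<in>S - {s}. b t) \<in> rat_poly T (\<Sum>t\<in>S - {s}. D)"
      using rat_poly_prod[OF T, of "S - {s}" b "\<lambda>_. D"] S(1) ab_D by auto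
    then have "a' s \<in> rat_poly T (D + (\<Sum>t\<in>S - {s}. D))"
      unfolding a'_def using ab_D[OF s] by (intro rat_poly_mult[OF T])
    moreover have "D + (\<Sum>t\<in>S - {s}. D) = c"
      using s S(1) by (simp add: c_def card_Diff_singleton)
        (metis card_gt_0_iff empty_iff mult_Suc Suc_pred)
    ultimately show "a' s \<in> rat_poly T c" by simp
    have "(\<Prod>s\<in>S. b s) = b s * (\<Prod>t\<in>S - {s}. b t)" using s S(1) by (simp add: prod.remove)
    moreover have "(\<Prod>t\<in>S - {s}. b t) \<noteq> 0" using ab S(1) by simp
    ultimately show "s = a' s / (\<Prod>s\<in>S. b s)" using ab[OF s] by (simp add: a'_def)
  qed
  ultimately show ?thesis by blast
qed

lemma monomial_clear_denominator:
  assumes T: "finite T" and S: "finite S"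
    and b: "b \<in> rat_poly T D" "b \<noteq> 0" and a: "\<forall>s\<in>S. a s \<in> rat_poly T D \<and> s = a s / b"
    and e: "(\<Sum>s\<in>S. e s) \<le> n"
  shows "b ^ n * monomial S e \<in> rat_poly T (D * n)"
proof -
  have "monomial S e = (\<Prod>s\<in>S. (a s / b) ^ e s)"
    unfolding monomial_def using a by (intro prod.cong) auto
  also have "\<dots> = (\<Prod>s\<in>S. a s ^ e s) / b ^ (\<Sum>s\<in>S. e s)"
    by (simp add: power_divide prod_dividef power_sum)
  finally have "b ^ n * monomial S e = (\<Prod>s\<in>S. a s ^ e s) * (b ^ n / b ^ (\<Sum>s\<in>S. e s))"
    by simp
  also have "b ^ n / b ^ (\<Sum>s\<in>S. e s) = b ^ (n - (\<Sum>s\<in>S. e s))"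
    using b(2) e by (simp add: power_diff)
  finally have eq: "b ^ n * monomial S e = (\<Prod>s\<in>S. a s ^ e s) * b ^ (n - (\<Sum>s\<in>S. e s))" .
  have "(\<Prod>s\<in>S. a s ^ e s) \<in> rat_poly T (\<Sum>s\<in>S. D * e s)"
    using a by (intro rat_poly_prod[OF T S] rat_poly_power[OF T]) auto
  then have "b ^ n * monomial S e \<in> rat_poly T ((\<Sum>s\<in>S. D * e s) + D * (n - (\<Sum>s\<in>S. e s)))"
    unfolding eq by (intro rat_poly_mult[OF T] rat_poly_power[OF T b(1)])
  moreover have "(\<Sum>s\<in>S. D * e s) + D * (n - (\<Sum>s\<in>S. e s)) = D * n"
    using e by (simp add: sum_distrib_left[symmetric] diff_mult_distrib2)
  ultimately show ?thesis by simp
qed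

lemma card_exps_growth:
  fixes C m p :: nat
  assumes "m < p"
  shows "(C * (C + 1) ^ m + 1) ^ m < ((C + 1) ^ m + 1) ^ p"
proof -
  define M where "M = (C + 1) ^ m"
  have "(C * M + 1) ^ m \<le> ((C + 1) * (M + 1)) ^ m"
    by (rule power_mono) (simp_all add: algebra_simps)
  also have "\<dots> = (C + 1) ^ m * (M + 1) ^ m" by (rule power_mult_distrib)
  also have "\<dots> = M * (M + 1) ^ m" by (simp only: M_def)
  also have "\<dots> < (M + 1) ^ Suc m" by simp
  also have "\<dots> \<le> (M + 1) ^ p" using assms by (intro power_increasing) auto
  finally show ?thesis by (simp add: M_def)
qed

text \<open>If \<open>S \<subseteq> gen_field T\<close> is larger than \<open>T\<close>, then for large \<open>d\<close> the monomials in
  \<open>S\<close> of degree \<open>\<le> d\<close> in each variable, after clearing a common denominator, outnumber the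
  dimension of the space of polynomials in \<open>T\<close> containing them; a linear dependence among
  them is an algebraic relation on \<open>S\<close>.\<close>

lemma card_alg_indep_le:
  assumes T: "finite T" and ST: "S \<subseteq> gen_field T" and indep: "alg_indep_rat S"
  shows "card S \<le> card T"
proof (rule ccontr)
  assume "\<not> card S \<le> card T"
  then have less: "card T < card S" by simp
  have S: "finite S" using indep by (simp add: alg_indep_rat_def)
  obtain D b a where b: "b \<in> rat_poly T D" "b \<noteq> 0" and a: "\<forall>s\<in>S. a s \<in> rat_poly T D \<and> s = a s / b"
    using rat_fun_common_denominator[OF T S] ST gen_field_subset_rat_fun[OF T] by blast
  define d where "d = (D * card S + 1) ^ card T"
  define n where "n = card S * d"
  define E where "E = exps S d"
  have E: "finite E" using finite_exps[OF S] by (simp add: E_def)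
  have "(\<Sum>s\<in>S. e s) \<le> n" if "e \<in> E" for e
    using sum_mono[of S e "\<lambda>_. d"] that by (auto simp: E_def exps_def n_def)
  then have in_poly: "b ^ n * monomial S e \<in> rat_poly T (D * n)" if "e \<in> E" for e
    using monomial_clear_denominator[OF T S b a] that by blast
  have card_less: "card (exps T (D * n)) < card E"
    using card_exps_growth[OF less, of "D * card S"]
    by (simp add: card_exps[OF T] card_exps[OF S] E_def d_def n_def mult.assoc mult.commute)
  then obtain c where c: "\<exists>e\<in>E. c e \<noteq> 0" "(\<Sum>e\<in>E. of_rat (c e) * (b ^ n * monomial S e)) = 0"
    using rat_poly_lin_dependent[OF T E card_less, where g = "\<lambda>e. b ^ n * monomial S e"] in_poly
    by blast
  have "b ^ n * (\<Sum>e\<in>E. of_rat (c e) * monomial S e) = 0"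
    using c(2) by (simp add: sum_distrib_left algebra_simps)
  then have "(\<Sum>e\<in>E. of_rat (c e) * (\<Prod>s\<in>S. s ^ e s)) = 0"
    using b(2) by (simp add: monomial_def)
  moreover have "\<forall>e\<in>E. \<forall>x. x \<notin> S \<longrightarrow> e x = 0" by (auto simp: E_def exps_def)
  ultimately have "\<forall>e\<in>E. c e = 0" using indep E unfolding alg_indep_rat_def by blast
  then show False using c(1) by blast
qed

lemma trdeg_le_card:
  assumes "finite T" "field_of P \<subseteq> gen_field T"
  shows "trdeg P \<le> card T"
proof -
  define X where "X = {card S | S. S \<subseteq> field_of P \<and> alg_indep_rat S}"
  have "n \<le> card T" if "n \<in> X" for n
    using that card_alg_indep_le[OF assms(1)] assms(2) by (auto simp: X_def)
  then have "Sup X \<le> card T" by (cases "X = {}") (auto intro: cSup_least)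
  then show ?thesis by (simp add: trdeg_def trdeg_field_def X_def)
qed

section \<open>Convex hulls and vertices\<close>

definition lincomb :: "((nat \<Rightarrow> real) \<Rightarrow> real) \<Rightarrow> (nat \<Rightarrow> real) set \<Rightarrow> (nat \<Rightarrow> real)" where
  "lincomb u V = (\<lambda>i. \<Sum>v\<in>V. u v * v i)"

lemma conv_hull_lincomb:
  "conv_hull V = {x. \<exists>u. (\<forall>v\<in>V. 0 \<le> u v) \<and> sum u V = 1 \<and> x = lincomb u V}"
  unfolding conv_hull_def lincomb_def by simp

lemma lincomb_add_scaled: "lincomb (\<lambda>w. a w + c * b w) S i = lincomb a S i + c * lincomb b S i"
  by (simp add: lincomb_def distrib_right sum.distrib sum_distrib_left mult.assoc)

lemma lincomb_in_conv_hull: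
  assumes "finite W" "S \<subseteq> W" "\<forall>w\<in>S. 0 \<le> u w" "sum u S = 1"
  shows "lincomb u S \<in> conv_hull W"
proof -
  define u' where "u' w = (if w \<in> S then u w else 0)" for w
  have "sum u' W = sum u' S" using assms by (intro sum.mono_neutral_right) (auto simp: u'_def)
  moreover have "lincomb u' W = lincomb u' S"
    unfolding lincomb_def using assms by (intro ext sum.mono_neutral_right) (auto simp: u'_def)
  moreover have "sum u' S = sum u S" "lincomb u' S = lincomb u S"
    unfolding lincomb_def by (auto simp: u'_def)
  moreover have "\<forall>w\<in>W. 0 \<le> u' w" using assms by (simp add: u'_def)
  ultimately show ?thesis
    unfolding conv_hull_lincomb using assms(4) by (intro CollectI exI[of _ u']) simp
qed

lemma mem_conv_hull:
  assumes "finite V" "w \<in> V"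
  shows "w \<in> conv_hull V"
proof -
  have "lincomb (\<lambda>_. 1) {w} = w" by (simp add: lincomb_def)
  then show ?thesis using lincomb_in_conv_hull[of V "{w}" "\<lambda>_. 1"] assms by simp
qed

lemma conv_hull_mono:
  assumes "finite U" and VU: "V \<subseteq> conv_hull U"
  shows "conv_hull V \<subseteq> conv_hull U"
proof
  fix x assume "x \<in> conv_hull V"
  then obtain u where u: "\<forall>v\<in>V. 0 \<le> u v" "sum u V = 1" "x = lincomb u V"
    by (auto simp: conv_hull_lincomb)
  have "\<forall>v\<in>V. \<exists>l. (\<forall>w\<in>U. 0 \<le> l w) \<and> sum l U = 1 \<and> v = lincomb l U"
    using VU by (auto simp: conv_hull_lincomb)
  then obtain l where l: "\<And>v. v \<in> V \<Longrightarrow> (\<forall>w\<in>U. 0 \<le> l v w) \<and> sum (l v) U = 1 \<and> v = lincomb (l v) U"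
    by metis
  define m where "m w = (\<Sum>v\<in>V. u v * l v w)" for w
  have "\<forall>w\<in>U. 0 \<le> m w" using u l by (auto simp: m_def intro!: sum_nonneg)
  moreover have "sum m U = (\<Sum>v\<in>V. u v * sum (l v) U)"
    unfolding m_def by (subst sum.swap) (simp add: sum_distrib_left)
  moreover have "x i = lincomb m U i" for i
  proof -
    have "x i = (\<Sum>v\<in>V. u v * lincomb (l v) U i)"
      using u(3) l by (auto simp: lincomb_def intro!: sum.cong)
    also have "\<dots> = lincomb m U i" unfolding lincomb_def m_def
      by (simp add: sum_distrib_left sum_distrib_right mult.assoc) (rule sum.swap)
    finally show ?thesis .
  qed
  ultimately show "x \<in> conv_hull U" using u l by (auto simp: conv_hull_lincomb)
qed

lemma lincomb_unit:
  assumes "finite V" "\<forall>v\<in>V. 0 \<le> u v" "sum u V = 1" "w \<in> V" "u w = 1"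
  shows "lincomb u V = w"
proof
  fix i
  have "sum u (V - {w}) = 0" using assms by (simp add: sum.remove)
  then have "\<forall>v\<in>V - {w}. u v = 0" using assms by (subst (asm) sum_nonneg_eq_0_iff) auto
  then have "(\<Sum>v\<in>V - {w}. u v * v i) = 0" by simp
  then show "lincomb u V i = w i" using assms by (simp add: lincomb_def sum.remove)
qed

lemma lincomb_split_point:
  assumes V: "finite V" "w \<in> V" and u: "\<forall>v\<in>V. 0 \<le> u v" "sum u V = 1" "u w < 1"
  obtains z where "z \<in> conv_hull (V - {w})" "lincomb u V = (\<lambda>i. u w * w i + (1 - u w) * z i)"
proof -
  define t where "t = 1 - u w"
  have t: "0 < t" using u(3) by (simp add: t_def)
  define u' where "u' v = u v / t" for v
  have "sum u V = u w + sum u (V - {w})" using V by (simp add: sum.remove)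
  then have "sum u' (V - {w}) = 1"
    using u(2) t by (simp add: u'_def t_def sum_divide_distrib[symmetric])
  then have z: "lincomb u' (V - {w}) \<in> conv_hull (V - {w})"
    using V u(1) t by (intro lincomb_in_conv_hull) (auto simp: u'_def)
  have "lincomb u V i = u w * w i + (\<Sum>v\<in>V - {w}. u v * v i)" for i
    using V by (simp add: lincomb_def sum.remove)
  then have "lincomb u V = (\<lambda>i. u w * w i + (1 - u w) * lincomb u' (V - {w}) i)"
    using t by (simp add: fun_eq_iff lincomb_def u'_def t_def sum_divide_distrib[symmetric])
  then show ?thesis using that[OF z] by blast
qed

lemma vertices_conv_hull_subset:
  assumes V: "finite V"
  shows "vertices (conv_hull V) \<subseteq> V"
proof
  fix x assume x: "x \<in> vertices (conv_hull V)"
  then obtain u where u: "\<forall>v\<in>V. 0 \<le> u v" "sum u V = 1" "x = lincomb u V"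
    by (auto simp: vertices_def conv_hull_lincomb)
  show "x \<in> V"
  proof (rule ccontr)
    assume xV: "x \<notin> V"
    from u(2) obtain w where w: "w \<in> V" "u w \<noteq> 0" by (metis sum.neutral zero_neq_one)
    have "u w \<noteq> 1" using lincomb_unit[OF V u(1,2) w(1)] u(3) xV w by auto
    moreover have "u w \<le> 1" using member_le_sum[of w V u] V u w by auto
    moreover have "0 < u w" using u w by force
    ultimately obtain z where z: "z \<in> conv_hull (V - {w})"
      and x_eq: "x = (\<lambda>i. u w * w i + (1 - u w) * z i)"
      using lincomb_split_point[OF V w(1) u(1,2)] u(3) by (metis order_le_neq_trans)
    have "z \<in> conv_hull V"
      using z V mem_conv_hull[of V] by (intro conv_hull_mono[OF V, THEN subsetD]) auto
    moreover have "w \<noteq> z" using x_eq xV w(1) by (auto simp: algebra_simps)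
    moreover have "x = (\<lambda>i. (1 - (1 - u w)) * w i + (1 - u w) * z i)" using x_eq by simp
    moreover have "0 < 1 - u w" "1 - u w < 1" using \<open>0 < u w\<close> \<open>u w \<noteq> 1\<close> \<open>u w \<le> 1\<close> by auto
    ultimately show False
      using x mem_conv_hull[OF V w(1)] unfolding vertices_def by blast
  qed
qed

lemma non_vertex_in_conv_hull_remove:
  assumes V: "finite V" and w: "w \<in> V" and nv: "w \<notin> vertices (conv_hull V)"
  shows "w \<in> conv_hull (V - {w})"
proof -
  have "w \<in> conv_hull V" by (rule mem_conv_hull[OF V w])
  with nv obtain a b t where ab: "a \<in> conv_hull V" "b \<in> conv_hull V" "a \<noteq> b" "0 < t" "t < 1"
     "w = (\<lambda>i. (1 - t) * a i + t * b i)" unfolding vertices_def by blast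
  obtain \<alpha> where \<alpha>: "\<forall>v\<in>V. 0 \<le> \<alpha> v" "sum \<alpha> V = 1" "a = lincomb \<alpha> V"
    using ab(1) by (auto simp: conv_hull_lincomb)
  obtain \<beta> where \<beta>: "\<forall>v\<in>V. 0 \<le> \<beta> v" "sum \<beta> V = 1" "b = lincomb \<beta> V"
    using ab(2) by (auto simp: conv_hull_lincomb)
  define l where "l v = (1 - t) * \<alpha> v + t * \<beta> v" for v
  have l: "\<forall>v\<in>V. 0 \<le> l v" "sum l V = 1"
    using \<alpha> \<beta> ab by (auto simp: l_def sum.distrib sum_distrib_left[symmetric])
  have wl: "w = lincomb l V"
  proof
    fix i
    have "lincomb l V i = (1 - t) * lincomb \<alpha> V i + t * lincomb \<beta> V i"
      by (simp add: lincomb_def l_def distrib_right sum.distrib sum_distrib_left mult.assoc)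
    then show "w i = lincomb l V i" using ab(6) \<alpha>(3) \<beta>(3) by simp
  qed
  have "\<alpha> w \<le> 1" "\<beta> w \<le> 1"
    using member_le_sum[of w V \<alpha>] member_le_sum[of w V \<beta>] V w \<alpha>(1,2) \<beta>(1,2) by auto
  moreover have "\<alpha> w \<noteq> 1 \<or> \<beta> w \<noteq> 1"
    using lincomb_unit[OF V \<alpha>(1,2) w] lincomb_unit[OF V \<beta>(1,2) w] \<alpha>(3) \<beta>(3) ab(3) by auto
  ultimately have "l w < 1"
    using ab(4,5) unfolding l_def by (smt (verit, best) mult_less_cancel_left_pos mult_left_le)
  then obtain z where z: "z \<in> conv_hull (V - {w})" "w = (\<lambda>i. l w * w i + (1 - l w) * z i)"
    using lincomb_split_point[OF V w l] wl by metis
  have "(1 - l w) * (w i - z i) = 0" for i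
    using fun_cong[OF z(2), of i] by (simp add: algebra_simps)
  then have "w = z" using \<open>l w < 1\<close> by (simp add: fun_eq_iff)
  then show ?thesis using z(1) by simp
qed

lemma conv_hull_vertices: "finite V \<Longrightarrow> conv_hull (vertices (conv_hull V)) = conv_hull V"
proof (induction "card V" arbitrary: V rule: less_induct)
  case less
  show ?case
  proof (cases "V \<subseteq> vertices (conv_hull V)")
    case True
    then have "vertices (conv_hull V) = V" using vertices_conv_hull_subset[OF less.prems] by blast
    then show ?thesis by simp
  next
    case False
    then obtain w where w: "w \<in> V" "w \<notin> vertices (conv_hull V)" by blast
    have fin': "finite (V - {w})" using less.prems by simp
    have "conv_hull (V - {w}) \<subseteq> conv_hull V"
      using mem_conv_hull[OF less.prems] by (intro conv_hull_mono[OF less.prems]) auto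
    moreover have "conv_hull V \<subseteq> conv_hull (V - {w})"
    proof (rule conv_hull_mono[OF fin'], rule subsetI)
      fix x assume "x \<in> V"
      then show "x \<in> conv_hull (V - {w})"
        using mem_conv_hull[OF fin'] non_vertex_in_conv_hull_remove[OF less.prems w]
        by (cases "x = w") auto
    qed
    ultimately have eq: "conv_hull (V - {w}) = conv_hull V" by blast
    have "card (V - {w}) < card V" by (rule card_Diff1_less[OF less.prems w(1)])
    from less.hyps[OF this fin'] show ?thesis by (simp add: eq)
  qed
qed

lemma ex_pos_scaled_below:
  fixes l \<delta> :: "'a \<Rightarrow> real"
  assumes "finite S" "\<forall>w\<in>S. 0 < l w"
  shows "\<exists>\<epsilon>>0. \<forall>w\<in>S. \<epsilon> * \<bar>\<delta> w\<bar> < l w"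
proof (cases "S = {}")
  case True then show ?thesis by (intro exI[of _ 1]) auto
next
  case False
  define \<epsilon> where "\<epsilon> = Min ((\<lambda>w. l w / (\<bar>\<delta> w\<bar> + 1)) ` S)"
  have "\<epsilon> > 0" using assms False by (simp add: \<epsilon>_def Min_gr_iff)
  moreover have "\<epsilon> * \<bar>\<delta> w\<bar> < l w" if w: "w \<in> S" for w
  proof -
    have "\<epsilon> \<le> l w / (\<bar>\<delta> w\<bar> + 1)" using assms w by (simp add: \<epsilon>_def)
    then have "\<epsilon> * \<bar>\<delta> w\<bar> \<le> l w / (\<bar>\<delta> w\<bar> + 1) * \<bar>\<delta> w\<bar>" by (rule mult_right_mono) simp
    also have "\<dots> < l w"
    proof -
      have "l w * \<bar>\<delta> w\<bar> < l w * (\<bar>\<delta> w\<bar> + 1)" using assms w by simp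
      then show ?thesis by (simp add: field_simps)
    qed
    finally show ?thesis .
  qed
  ultimately show ?thesis by blast
qed

lemma affine_dependence_shrink_support:
  fixes l \<delta> :: "(nat \<Rightarrow> real) \<Rightarrow> real"
  assumes finS: "finite S" and lpos: "\<forall>w\<in>S. 0 < l w" and ls: "sum l S = 1"
    and ds: "sum \<delta> S = 0" and dc: "\<forall>i. lincomb \<delta> S i = 0" and w0: "w0 \<in> S" "\<delta> w0 \<noteq> 0"
  shows "\<exists>S' l'. S' \<subset> S \<and> (\<forall>w\<in>S'. 0 < l' w) \<and> sum l' S' = 1 \<and> lincomb l' S' = lincomb l S"
proof -
  define Ng where "Ng = {w\<in>S. \<delta> w < 0}"
  have "Ng \<noteq> {}"
  proof
    assume "Ng = {}"
    then have "\<forall>w\<in>S. 0 \<le> \<delta> w" by (force simp: Ng_def)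
    then have "\<forall>w\<in>S. \<delta> w = 0" using ds finS sum_nonneg_eq_0_iff by blast
    then show False using w0 by blast
  qed
  have finN: "finite Ng" using finS by (simp add: Ng_def)
  define \<tau> where "\<tau> = Min ((\<lambda>w. l w / (- \<delta> w)) ` Ng)"
  have "\<tau> \<in> (\<lambda>w. l w / (- \<delta> w)) ` Ng"
    unfolding \<tau>_def by (rule Min_in) (use finN \<open>Ng \<noteq> {}\<close> in auto)
  then obtain ws where ws: "ws \<in> Ng" "\<tau> = l ws / (- \<delta> ws)" by blast
  have tpos: "\<tau> > 0" using ws lpos by (auto simp: Ng_def divide_pos_neg)
  define l1 where "l1 w = l w + \<tau> * \<delta> w" for w
  have l1nn: "0 \<le> l1 w" if w: "w \<in> S" for w
  proof (cases "\<delta> w < 0")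
    case True
    then have "\<tau> \<le> l w / (- \<delta> w)" using finN w by (auto simp: \<tau>_def Ng_def)
    then have "\<tau> * (- \<delta> w) \<le> l w" using True by (simp add: field_simps)
    then show ?thesis by (simp add: l1_def)
  next
    case False
    then have "0 \<le> \<tau> * \<delta> w" using tpos by simp
    then show ?thesis using lpos w by (simp add: l1_def add_nonneg_nonneg less_imp_le)
  qed
  have l1ws: "l1 ws = 0" using ws by (auto simp: l1_def Ng_def field_simps)
  define S' where "S' = {w\<in>S. 0 < l1 w}"
  have "ws \<in> S" "ws \<notin> S'" using ws l1ws by (auto simp: S'_def Ng_def)
  then have "S' \<subset> S" by (auto simp: S'_def)
  moreover have "sum l1 S' = sum l1 S"
    using finS l1nn by (intro sum.mono_neutral_left) (auto simp: S'_def less_le)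
  moreover have "sum l1 S = 1"
    using ls ds by (simp add: l1_def sum.distrib sum_distrib_left[symmetric])
  moreover have "lincomb l1 S' = lincomb l1 S" unfolding lincomb_def
    using finS l1nn by (intro ext sum.mono_neutral_left) (auto simp: S'_def less_le)
  moreover have "lincomb l1 S = lincomb l S"
  proof
    fix i show "lincomb l1 S i = lincomb l S i" using dc unfolding l1_def lincomb_add_scaled by simp
  qed
  ultimately show ?thesis by (intro exI[of _ S'] exI[of _ l1]) (auto simp: S'_def)
qed

section \<open>Coordinates of the vertices of a slice\<close>

lemma vertex_no_direction:
  assumes "v \<in> vertices P" "(\<lambda>i. v i + d i) \<in> P" "(\<lambda>i. v i - d i) \<in> P"
  shows "d i = 0"
proof (rule ccontr)
  assume "d i \<noteq> 0"
  then have "(\<lambda>i. v i - d i) \<noteq> (\<lambda>i. v i + d i)" by (auto dest: fun_cong[of _ _ i])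
  moreover have "v = (\<lambda>j. (1 - 1 / 2) * (v j - d j) + 1 / 2 * (v j + d j))"
    by (simp add: fun_eq_iff field_simps)
  moreover have "0 < (1 / 2 :: real)" "(1 / 2 :: real) < 1" by simp_all
  ultimately show False using assms unfolding vertices_def by blast
qed

text \<open>A vertex \<open>v\<close> of the slice is a positive convex combination of a minimal set \<open>S\<close> of
  points of \<open>W\<close>; its weights are then the only affine weights on \<open>S\<close> whose combination lies in
  the slicing subspace: a different choice would either move \<open>v\<close> inside \<open>P\<close> in both directions
  or give an affine dependence on \<open>S\<close>, contradicting minimality.\<close>

lemma vertex_slice_unique_weights:
  fixes W :: "(nat \<Rightarrow> real) set"
  assumes W: "finite W" and P: "P = {x \<in> conv_hull W. \<forall>i\<in>I. x i = 0}" and v: "v \<in> vertices P"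
  obtains S l where "S \<subseteq> W" "\<forall>w\<in>S. 0 < l w" "sum l S = 1" "v = lincomb l S"
    "\<And>m. sum m S = 1 \<Longrightarrow> \<forall>i\<in>I. lincomb m S i = 0 \<Longrightarrow> \<forall>w\<in>S. m w = l w"
proof -
  have vP: "v \<in> conv_hull W" "\<forall>i\<in>I. v i = 0" using v P by (auto simp: vertices_def)
  define support where "support S \<longleftrightarrow>
    S \<subseteq> W \<and> (\<exists>l. (\<forall>w\<in>S. 0 < l w) \<and> sum l S = 1 \<and> v = lincomb l S)" for S
  obtain u where u: "\<forall>w\<in>W. 0 \<le> u w" "sum u W = 1" "v = lincomb u W"
    using vP by (auto simp: conv_hull_lincomb)
  have "sum u {w\<in>W. 0 < u w} = sum u W" "lincomb u {w\<in>W. 0 < u w} = lincomb u W"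
    unfolding lincomb_def using W u(1) by (auto intro!: ext sum.mono_neutral_left simp: less_le)
  then have "support {w\<in>W. 0 < u w}" unfolding support_def using u by (intro conjI exI[of _ u]) auto
  then obtain S where "support S" and S_min: "\<And>S'. support S' \<Longrightarrow> card S \<le> card S'"
    using ex_has_least_nat[of support _ card] by blast
  then obtain l where SW: "S \<subseteq> W" and l: "\<forall>w\<in>S. 0 < l w" "sum l S = 1" "v = lincomb l S"
    unfolding support_def by blast
  have S: "finite S" using SW W finite_subset by blast
  have "\<forall>w\<in>S. m w = l w" if m: "sum m S = 1" "\<forall>i\<in>I. lincomb m S i = 0" for m
  proof (rule ccontr)
    assume "\<not> (\<forall>w\<in>S. m w = l w)"
    then obtain w0 where w0: "w0 \<in> S" "m w0 - l w0 \<noteq> 0" by auto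
    define \<delta> where "\<delta> w = m w - l w" for w
    have \<delta>_sum: "sum \<delta> S = 0" using m l by (simp add: \<delta>_def sum_subtractf)
    obtain \<epsilon> where \<epsilon>: "\<epsilon> > 0" "\<forall>w\<in>S. \<epsilon> * \<bar>\<delta> w\<bar> < l w"
      using ex_pos_scaled_below[OF S l(1)] by blast
    have perturb: "(\<lambda>i. v i + c * lincomb \<delta> S i) \<in> P" if "\<bar>c\<bar> = \<epsilon>" for c
    proof -
      have "\<forall>w\<in>S. 0 \<le> l w + c * \<delta> w"
      proof
        fix w assume "w \<in> S"
        then have "\<bar>c * \<delta> w\<bar> < l w" using \<epsilon>(2) \<open>\<bar>c\<bar> = \<epsilon>\<close> by (simp add: abs_mult)
        then show "0 \<le> l w + c * \<delta> w" using abs_ge_minus_self[of "c * \<delta> w"] by linarith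
      qed
      moreover have "sum (\<lambda>w. l w + c * \<delta> w) S = 1"
        using l(2) \<delta>_sum by (simp add: sum.distrib sum_distrib_left[symmetric])
      ultimately have "lincomb (\<lambda>w. l w + c * \<delta> w) S \<in> conv_hull W"
        by (rule lincomb_in_conv_hull[OF W SW])
      moreover have "lincomb (\<lambda>w. l w + c * \<delta> w) S = (\<lambda>i. v i + c * lincomb \<delta> S i)"
        by (simp add: lincomb_add_scaled l(3) fun_eq_iff)
      moreover have "lincomb \<delta> S i = lincomb m S i - v i" for i
        by (simp add: \<delta>_def lincomb_def l left_diff_distrib sum_subtractf)
      ultimately show ?thesis using P vP(2) m(2) by simp
    qed
    have "(\<lambda>i. v i + \<epsilon> * lincomb \<delta> S i) \<in> P" "(\<lambda>i. v i - \<epsilon> * lincomb \<delta> S i) \<in> P"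
      using perturb[of \<epsilon>] perturb[of "- \<epsilon>"] \<epsilon>(1) by simp_all
    then have "\<epsilon> * lincomb \<delta> S i = 0" for i by (rule vertex_no_direction[OF v])
    then have "\<forall>i. lincomb \<delta> S i = 0" using \<epsilon>(1) by simp
    from affine_dependence_shrink_support[OF S l(1,2) \<delta>_sum this w0(1)] w0(2)
    obtain S' l' where S': "S' \<subset> S" "\<forall>w\<in>S'. 0 < l' w" "sum l' S' = 1" "lincomb l' S' = lincomb l S"
      by (auto simp: \<delta>_def)
    then have "support S'" using SW l(3) by (auto simp: support_def)
    then show False using S_min psubset_card_mono[OF S S'(1)] by fastforce
  qed
  then show ?thesis using that SW l by blast
qed

definition coord_indep :: "nat set \<Rightarrow> (nat \<Rightarrow> real) set \<Rightarrow> bool" where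
  "coord_indep I B \<longleftrightarrow> (\<forall>c. (\<forall>i\<in>I. (\<Sum>u\<in>B. c u * u i) = 0) \<longrightarrow> (\<forall>u\<in>B. c u = 0))"

text \<open>The barycentric weights of a vertex of the slice are the unique solution of a linear
  system whose coefficients are the coordinates \<open>\<alpha>\<close> of the \<open>I\<close>-parts of the points of \<open>W\<close>
  in the basis \<open>B\<close>; hence they lie in any subfield containing these coordinates.\<close>

lemma vertex_slice_coord_in_subfield:
  fixes W B :: "(nat \<Rightarrow> real) set" and \<alpha> :: "(nat \<Rightarrow> real) \<Rightarrow> (nat \<Rightarrow> real) \<Rightarrow> real"
  assumes W: "finite W" and P: "P = {x \<in> conv_hull W. \<forall>i\<in>I. x i = 0}"
    and B: "coord_indep I B"
    and \<alpha>: "\<forall>w\<in>W. \<forall>i\<in>I. w i = (\<Sum>u\<in>B. \<alpha> w u * u i)"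
    and K: "subfield K"
    and \<alpha>_K: "\<forall>w\<in>W. \<forall>u\<in>B. \<alpha> w u \<in> K"
    and rest_K: "\<forall>w\<in>W. \<forall>i. i \<notin> I \<longrightarrow> w i - (\<Sum>u\<in>B. \<alpha> w u * u i) \<in> K"
    and v: "v \<in> vertices P"
  shows "v i \<in> K"
proof -
  obtain S l where SW: "S \<subseteq> W" and l: "\<forall>w\<in>S. 0 < l w" "sum l S = 1" "v = lincomb l S"
    and unique: "\<And>m. sum m S = 1 \<Longrightarrow> \<forall>i\<in>I. lincomb m S i = 0 \<Longrightarrow> \<forall>w\<in>S. m w = l w"
    using vertex_slice_unique_weights[OF W P v] by blast
  have S: "finite S" using SW W finite_subset by blast
  have lincomb_split: "lincomb m S i = (\<Sum>w\<in>S. m w * (w i - (\<Sum>u\<in>B. \<alpha> w u * u i)))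
      + (\<Sum>u\<in>B. (\<Sum>w\<in>S. m w * \<alpha> w u) * u i)" for m i
    by (simp add: lincomb_def right_diff_distrib sum_subtractf sum_distrib_left
        sum_distrib_right mult.assoc sum.swap[of _ B])
  have lincomb_I: "lincomb m S i = (\<Sum>u\<in>B. (\<Sum>w\<in>S. m w * \<alpha> w u) * u i)" if "i \<in> I" for m i
    using lincomb_split[of m i] \<alpha> SW that by (simp add: subset_iff)
  have vanish_iff: "(\<forall>i\<in>I. lincomb m S i = 0) \<longleftrightarrow> (\<forall>u\<in>B. (\<Sum>w\<in>S. m w * \<alpha> w u) = 0)" for m
    using B lincomb_I unfolding coord_indep_def by auto
  define E :: "(((nat \<Rightarrow> real) \<Rightarrow> real) \<times> real) set"
    where "E = insert ((\<lambda>_. 1), 1) ((\<lambda>u. ((\<lambda>w. \<alpha> w u), 0)) ` B)"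
  have solutions: "m \<in> lin_solutions S E \<longleftrightarrow> sum m S = 1 \<and> (\<forall>i\<in>I. lincomb m S i = 0)" for m
    by (simp add: vanish_iff lin_solutions_def E_def mult.commute)
  have "\<forall>(a, b)\<in>E. (\<forall>w\<in>S. a w \<in> K) \<and> b \<in> K"
    using \<alpha>_K SW subfield_zero[OF K] subfield_one[OF K] by (auto simp: E_def)
  moreover have "l \<in> lin_solutions S E" using solutions l v P by (auto simp: vertices_def)
  moreover have "\<forall>m\<in>lin_solutions S E. \<forall>w\<in>S. m w = l w" using solutions unique by blast
  ultimately have l_K: "\<forall>w\<in>S. l w \<in> K" by (rule unique_solution_in_subfield[OF K S])
  show "v i \<in> K"
  proof (cases "i \<in> I")
    case True
    then show ?thesis using v P subfield_zero[OF K] by (auto simp: vertices_def)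
  next
    case False
    have "v i = (\<Sum>w\<in>S. l w * (w i - (\<Sum>u\<in>B. \<alpha> w u * u i)))"
      using lincomb_split[of l i] vanish_iff[of l] solutions l v P by (auto simp: vertices_def)
    also have "\<dots> \<in> K"
      using l_K rest_K SW False by (intro subfield_sum[OF K] subfield_mult[OF K]) auto
    finally show ?thesis .
  qed
qed

section \<open>Counting parameters\<close>

lemma coord_indep_insert_span:
  assumes finB: "finite B" and w: "w \<notin> B"
    and indep: "coord_indep I B" and dep: "\<not> coord_indep I (insert w B)"
  shows "\<exists>a. \<forall>i\<in>I. w i = (\<Sum>u\<in>B. a u * u i)"
proof -
  obtain c where c0: "\<forall>i\<in>I. (\<Sum>u\<in>insert w B. c u * u i) = 0"
    and c_nz: "\<exists>u\<in>insert w B. c u \<noteq> 0"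
    using dep unfolding coord_indep_def by blast
  have c: "c w * w i + (\<Sum>u\<in>B. c u * u i) = 0" if "i \<in> I" for i
    using c0 that w finB by simp
  have cw: "c w \<noteq> 0"
  proof
    assume "c w = 0"
    then have "\<forall>i\<in>I. (\<Sum>u\<in>B. c u * u i) = 0" using c by simp
    then have "\<forall>u\<in>B. c u = 0" using indep unfolding coord_indep_def by blast
    then show False using c_nz \<open>c w = 0\<close> by auto
  qed
  have "w i = (\<Sum>u\<in>B. - c u / c w * u i)" if "i \<in> I" for i
  proof -
    have "(\<Sum>u\<in>B. - c u / c w * u i) = - (\<Sum>u\<in>B. c u * u i) / c w"
      by (simp add: sum_divide_distrib sum_negf)
    also have "\<dots> = w i" using c[OF that] cw by (simp add: field_simps add_eq_0_iff)
    finally show ?thesis by simp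
  qed
  then show ?thesis by (intro exI[of _ "\<lambda>u. - c u / c w"]) blast
qed

lemma ex_coord_basis:
  fixes W :: "(nat \<Rightarrow> real) set"
  assumes W: "finite W"
  obtains B \<alpha> where "B \<subseteq> W" "coord_indep I B"
    "\<forall>w\<in>W. \<forall>i\<in>I. w i = (\<Sum>u\<in>B. \<alpha> w u * u i)"
    "\<forall>w\<in>B. \<forall>u\<in>B. \<alpha> w u = (if w = u then 1 else 0)"
proof -
  define basis where "basis B \<longleftrightarrow> B \<subseteq> W \<and> coord_indep I B" for B
  have "basis {}" by (simp add: basis_def coord_indep_def)
  then obtain B where B: "basis B"
    and B_max: "\<And>B'. basis B' \<Longrightarrow> card W - card B \<le> card W - card B'"
    using ex_has_least_nat[of basis "{}" "\<lambda>B. card W - card B"] by blast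
  have BW: "B \<subseteq> W" and indep: "coord_indep I B" using B by (auto simp: basis_def)
  have finB: "finite B" using BW W finite_subset by blast
  have "\<exists>a. \<forall>i\<in>I. w i = (\<Sum>u\<in>B. a u * u i)" if w: "w \<in> W - B" for w
  proof (rule coord_indep_insert_span[OF finB _ indep])
    have "card (insert w B) \<le> card W" using w BW W by (intro card_mono) auto
    moreover have "card (insert w B) = Suc (card B)" using w finB by simp
    ultimately have "\<not> basis (insert w B)" using B_max[of "insert w B"] by linarith
    then show "\<not> coord_indep I (insert w B)" using w BW by (simp add: basis_def)
  qed (use w in simp)
  then obtain \<alpha>' where \<alpha>': "\<And>w. w \<in> W - B \<Longrightarrow> \<forall>i\<in>I. w i = (\<Sum>u\<in>B. \<alpha>' w u * u i)"
    by metis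
  define \<alpha> where "\<alpha> w u = (if w \<in> B then (if w = u then 1 else 0) else \<alpha>' w u)" for w u
  have "w i = (\<Sum>u\<in>B. \<alpha> w u * u i)" if w: "w \<in> W" and i: "i \<in> I" for w i
  proof (cases "w \<in> B")
    case True
    then have "(\<Sum>u\<in>B. \<alpha> w u * u i) = (\<Sum>u\<in>B. if w = u then u i else 0)"
      by (intro sum.cong) (auto simp: \<alpha>_def)
    then show ?thesis using True finB by simp
  next
    case False
    then have "(\<Sum>u\<in>B. \<alpha> w u * u i) = (\<Sum>u\<in>B. \<alpha>' w u * u i)" by (simp add: \<alpha>_def)
    moreover have "w i = (\<Sum>u\<in>B. \<alpha>' w u * u i)" using \<alpha>' w i False by blast
    ultimately show ?thesis by simp
  qed
  moreover have "\<forall>w\<in>B. \<forall>u\<in>B. \<alpha> w u = (if w = u then 1 else 0)" by (simp add: \<alpha>_def)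
  ultimately show ?thesis using that[OF BW indep] by blast
qed

lemma field_of_slice_subset:
  fixes W B :: "(nat \<Rightarrow> real) set" and \<alpha> :: "(nat \<Rightarrow> real) \<Rightarrow> (nat \<Rightarrow> real) \<Rightarrow> real"
  assumes W: "finite W" "W \<subseteq> R_space N" and P: "P = {x \<in> conv_hull W. \<forall>i\<in>{k..<N}. x i = 0}"
    and BW: "B \<subseteq> W" and B: "coord_indep {k..<N} B"
    and \<alpha>: "\<forall>w\<in>W. \<forall>i\<in>{k..<N}. w i = (\<Sum>u\<in>B. \<alpha> w u * u i)"
    and \<alpha>_B: "\<forall>w\<in>B. \<forall>u\<in>B. \<alpha> w u = (if w = u then 1 else 0)"
  shows "field_of P \<subseteq> gen_field ((\<lambda>(w, i). w i - (\<Sum>u\<in>B. \<alpha> w u * u i)) ` ((W - B) \<times> {..<k})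
                                  \<union> (\<lambda>(w, u). \<alpha> w u) ` ((W - B) \<times> B))"
    (is "_ \<subseteq> gen_field ?T")
proof -
  define rest where "rest w i = w i - (\<Sum>u\<in>B. \<alpha> w u * u i)" for w i
  define K where "K = gen_field ?T"
  have K: "subfield K" unfolding K_def by (rule subfield_gen_field)
  have TK: "?T \<subseteq> K" unfolding K_def by (rule gen_field_superset)
  have \<alpha>_K: "\<forall>w\<in>W. \<forall>u\<in>B. \<alpha> w u \<in> K"
  proof (intro ballI)
    fix w u assume w: "w \<in> W" and u: "u \<in> B"
    show "\<alpha> w u \<in> K"
    proof (cases "w \<in> B")
      case True
      then show ?thesis using \<alpha>_B u subfield_zero[OF K] subfield_one[OF K] by simp
    next
      case False
      then have "(w, u) \<in> (W - B) \<times> B" using w u by simp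
      then show ?thesis using TK by blast
    qed
  qed
  have rest_K: "rest w i \<in> K" if w: "w \<in> W" and i: "i \<notin> {k..<N}" for w i
  proof (cases "w \<in> B \<or> N \<le> i")
    case True
    have "rest w i = 0" if "w \<in> B"
    proof -
      have "(\<Sum>u\<in>B. \<alpha> w u * u i) = (\<Sum>u\<in>B. if w = u then u i else 0)"
        using that \<alpha>_B by (intro sum.cong) auto
      moreover have "finite B" using BW W(1) finite_subset by blast
      ultimately show ?thesis using that by (simp add: rest_def)
    qed
    moreover have "rest w i = 0" if "N \<le> i"
    proof -
      have "w i = 0" "\<forall>u\<in>B. u i = 0" using that BW W(2) w by (auto simp: R_space_def)
      then show ?thesis by (simp add: rest_def sum.neutral)
    qed
    ultimately show ?thesis using True subfield_zero[OF K] by auto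
  next
    case False
    then have "(w, i) \<in> (W - B) \<times> {..<k}" using w i by auto
    then show ?thesis using TK unfolding rest_def by blast
  qed
  have "v i \<in> K" if "v \<in> vertices P" for v i
    using vertex_slice_coord_in_subfield[OF W(1) P B \<alpha> K \<alpha>_K _ that] rest_K
    unfolding rest_def by blast
  then show ?thesis
    unfolding field_of_def K_def[symmetric] by (intro gen_field_least[OF _ K]) blast
qed

lemma trdeg_slice_le:
  fixes W :: "(nat \<Rightarrow> real) set"
  assumes W: "finite W" "W \<subseteq> R_space N" and P: "P = {x \<in> conv_hull W. \<forall>i\<in>{k..<N}. x i = 0}"
  obtains r where "r \<le> card W" "trdeg P \<le> (card W - r) * (k + r)"
proof -
  obtain B \<alpha> where BW: "B \<subseteq> W" and B: "coord_indep {k..<N} B"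
    and \<alpha>: "\<forall>w\<in>W. \<forall>i\<in>{k..<N}. w i = (\<Sum>u\<in>B. \<alpha> w u * u i)"
    and \<alpha>_B: "\<forall>w\<in>B. \<forall>u\<in>B. \<alpha> w u = (if w = u then 1 else 0)"
    using ex_coord_basis[OF W(1)] by blast
  have finB: "finite B" using BW W finite_subset by blast
  define T where "T = (\<lambda>(w, i). w i - (\<Sum>u\<in>B. \<alpha> w u * u i)) ` ((W - B) \<times> {..<k})
                      \<union> (\<lambda>(w, u). \<alpha> w u) ` ((W - B) \<times> B)"
  have "trdeg P \<le> card T"
    using field_of_slice_subset[OF W P BW B \<alpha> \<alpha>_B] W(1) finB
    by (intro trdeg_le_card) (simp_all add: T_def)
  also have "card T \<le> card ((W - B) \<times> {..<k}) + card ((W - B) \<times> B)"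
    unfolding T_def using W finB
    by (intro card_Un_le[THEN order_trans] add_mono card_image_le) auto
  also have "\<dots> = (card W - card B) * (k + card B)"
    using W finB BW by (simp add: card_cartesian_product card_Diff_subset distrib_left)
  finally show ?thesis using that card_mono[OF W(1) BW] by blast
qed

lemma two_sqrt_le:
  fixes t n r k :: nat
  assumes "r \<le> n" "t \<le> (n - r) * (k + r)"
  shows "2 * sqrt (real t) - real k \<le> real n"
proof -
  have "real t \<le> real ((n - r) * (k + r))"
    using assms(2) by (simp only: of_nat_le_iff)
  also have "\<dots> = real (n - r) * (real k + real r)" by simp
  also have "\<dots> \<le> ((real n + real k) / 2) ^ 2"
  proof -
    have "0 \<le> (real (n - r) - (real k + real r)) ^ 2" by simp
    then show ?thesis using assms(1) by (simp add: power2_eq_square algebra_simps of_nat_diff)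
  qed
  finally have "sqrt (real t) \<le> sqrt (((real n + real k) / 2) ^ 2)"
    by (rule real_sqrt_le_mono)
  then show ?thesis by simp
qed

lemma ic_attained:
  assumes "is_polytope k P"
  obtains N Q where "is_slice k P N Q" "card (vertices Q) = ic k P"
proof -
  have "is_slice k P k P" using assms by (auto simp: is_slice_def)
  then have "\<exists>N Q. is_slice k P N Q \<and> card (vertices Q) = card (vertices P)" by blast
  then have "\<exists>N Q. is_slice k P N Q \<and> card (vertices Q) = ic k P"
    unfolding ic_def by (rule LeastI)
  then show ?thesis using that by blast
qed

theorem theorem2:
  fixes k :: nat and P :: "(nat \<Rightarrow> real) set"
  assumes "is_polytope k P"
  shows "real (ic k P) \<ge> 2 * sqrt (real (trdeg P)) - real k"
proof -
  obtain N Q where slice: "is_slice k P N Q" and ic: "card (vertices Q) = ic k P"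
    using ic_attained[OF assms] .
  then obtain V where V: "finite V" "V \<subseteq> R_space N" and Q: "Q = conv_hull V"
    by (auto simp: is_slice_def is_polytope_def)
  define W where "W = vertices Q"
  have WV: "W \<subseteq> V" unfolding W_def Q by (rule vertices_conv_hull_subset[OF V(1)])
  have W: "finite W" "W \<subseteq> R_space N" using WV V finite_subset by auto
  have "P = {x \<in> conv_hull W. \<forall>i\<in>{k..<N}. x i = 0}"
    using slice conv_hull_vertices[OF V(1)] by (auto simp: is_slice_def W_def Q)
  then obtain r where "r \<le> card W" "trdeg P \<le> (card W - r) * (k + r)"
    using trdeg_slice_le[OF W] by blast
  then have "2 * sqrt (real (trdeg P)) - real k \<le> real (card W)" by (rule two_sqrt_le)
  then show ?thesis using ic by (simp add: W_def)
qed

end
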